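(* Let $G$ be a context-free grammar, $k\ge0$, and $N$ its canonical LR($k$) NFA. Let $U_0,U_1,\dots,U_r$ be vertices of $N$ with $U_0$ the starting vertex and an edge $U_{i-1}\xrightarrow{\sigma_i}U_i$ for each $i$ (labels $\sigma_i\in\Sigma\cup\Lambda\cup\{\varepsilon\}$), and suppose $U_r$ has an action on a lookahead $\lambda\in\Gamma^k$. Let $\zeta=\zeta_1\cdots\zeta_m$ be the string of non-$\varepsilon$ labels among $\sigma_1,\dots,\sigma_r$. Suppose $x_1\cdots x_s\in\Sigma^*$ and $P_1,\dots,P_m$ are parse trees, $P_j$ having root $\zeta_j$ (a single leaf if $\zeta_j$ is terminal), whose yields concatenate to $x_1\cdots x_s$; let $\mathcal S_{\mathrm{part}}$ be the concatenation of the LR parses of $P_1,\dots,P_m$. Then there exist $x_{s+1}\cdots x_n\in\Sigma^*$ with $\mathrm{First}_k(x_{s+1}\cdots x_n\dashv^k)=\{\lambda\}$ and a parse tree of $x_1\cdots x_n$ with root $S$ whose LR parse $\mathcal S$ has $\mathcal S_{\mathrm{part}}$ as a prefix.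
   Context: $G$ has finite nonterminal set $\Lambda$, terminal set $\Sigma$, $\Gamma=\Sigma\cup\{\dashv\}$ with $\dashv$ an end marker, and start symbol $S$ which appears on the left of exactly one production $S\to\eta$ and on no right-hand side. For $T\subseteq(\Lambda\cup\Gamma)^*$, $\mathrm{Gen}(T)$ is the set of $y\in\Gamma^*$ with $x\Rightarrow^*y$ for some $x\in T$, and $\mathrm{First}_k(T)=\{x_1\cdots x_{\min(k,r)}: x_1\cdots x_r\in T\}$; concatenations involving sets are taken elementwise. A dotted production is $X\to\alpha\cdot\beta$ where $X\to\alpha\beta$ is a production. Forward-reachable $k$-follow strings: the least assignment of subsets of $\Gamma^k$ to productions such that $\dashv^k$ is assigned to $S\to\eta$, and whenever $\lambda$ is assigned to $X\to\alpha Y\beta$ then every $\mu\in\mathrm{First}_k(\mathrm{Gen}(\beta\lambda))$ is assigned to every production $Y\to\gamma$. For a dotted production $\hat\Pi$ with underlying production $\Pi$, $\mathcal U(\hat\Pi)$ is the set assigned to $\Pi$. Canonical LR($k$) NFA: vertices $(\hat\Pi,\lambda)$ with $\lambda\in\mathcal U(\hat\Pi)$; starting vertex $(S\to\cdot\,\eta,\dashv^k)$; $\varepsilon$-edges from $(X\to\alpha\cdot Y\beta,\lambda)$ to $(Y\to\cdot\,\gamma,\mu)$ whenever $\mu\in\mathrm{First}_k(\mathrm{Gen}(\beta\lambda))$; edges labeled $\tau\in\Lambda\cup\Sigma$ from $(X\to\alpha\cdot\tau\beta,\lambda)$ to $(X\to\alpha\tau\cdot\beta,\lambda)$. Actions: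 vertex $(X\to\alpha\,\cdot,\lambda)$ has action ``Reduce $X\to\alpha$'' on lookahead $\lambda$; vertex $(X\to\alpha\cdot\sigma\beta,\lambda)$ with $\sigma\in\Sigma$ has action ``Shift'' on each lookahead $\mu\in\mathrm{First}_k(\mathrm{Gen}(\sigma\beta\lambda))$; there are no other actions. LR parse of a parse tree $P$: the sequence of operations obtained by a postorder traversal of $P$, where a leaf labeled by a terminal $\sigma$ contributes $\mathrm{Shift}(\sigma)$ and an internal node expanded by production $\Pi$ contributes $\mathrm{Reduce}(\Pi)$ (after its children; a node for a production $X\to\varepsilon$ has no children). *)

theory Defs
  imports Main "HOL-Library.Sublist"
begin

text \<open>Symbols of (\<Lambda> \<union> \<Gamma>): nonterminals, terminals of \<Sigma>, and the end marker.\<close>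
datatype ('n, 't) sym = NT 'n | Tm 't | EndM

type_synonym ('n, 't) prod = "'n \<times> ('n, 't) sym list"

definition wf_grammar :: "('n, 't) prod set \<Rightarrow> 'n \<Rightarrow> bool" where
  "wf_grammar P S \<longleftrightarrow> finite P \<and> (\<exists>!\<eta>. (S, \<eta>) \<in> P) \<and>
     (\<forall>(A, \<gamma>) \<in> P. NT S \<notin> set \<gamma> \<and> EndM \<notin> set \<gamma>)"

definition step :: "('n, 't) prod set \<Rightarrow> ('n, 't) sym list \<Rightarrow> ('n, 't) sym list \<Rightarrow> bool" where
  "step P x y \<longleftrightarrow> (\<exists>u v A \<gamma>. (A, \<gamma>) \<in> P \<and> x = u @ [NT A] @ v \<and> y = u @ \<gamma> @ v)"

definition is_terminal_str :: "('n, 't) sym list \<Rightarrow> bool" where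
  "is_terminal_str y \<longleftrightarrow> (\<forall>s \<in> set y. \<forall>A. s \<noteq> NT A)"

definition Gen :: "('n, 't) prod set \<Rightarrow> ('n, 't) sym list set \<Rightarrow> ('n, 't) sym list set" where
  "Gen P T = {y. is_terminal_str y \<and> (\<exists>x \<in> T. (step P)\<^sup>*\<^sup>* x y)}"

definition First :: "nat \<Rightarrow> 'a list set \<Rightarrow> 'a list set" where
  "First k T = (\<lambda>x0. take k x0) ` T"

inductive follow :: "('n, 't) prod set \<Rightarrow> 'n \<Rightarrow> nat \<Rightarrow> ('n, 't) prod \<Rightarrow> ('n, 't) sym list \<Rightarrow> bool"
  for P S k where
  start: "(S, \<eta>) \<in> P \<Longrightarrow> follow P S k (S, \<eta>) (replicate k EndM)"
| propagate: "follow P S k (X, \<alpha> @ [NT Y] @ \<beta>) lam \<Longrightarrow> (Y, \<gamma>) \<in> P \<Longrightarrow>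
         \<mu> \<in> First k (Gen P {\<beta> @ lam}) \<Longrightarrow> follow P S k (Y, \<gamma>) \<mu>"

text \<open>Dotted production X \<rightarrow> \<alpha>\<cdot>\<beta> represented as (X, \<alpha>, \<beta>); vertices of the canonical NFA.\<close>
type_synonym ('n, 't) dprod = "'n \<times> ('n, 't) sym list \<times> ('n, 't) sym list"
type_synonym ('n, 't) vertex = "('n, 't) dprod \<times> ('n, 't) sym list"

definition is_vertex :: "('n, 't) prod set \<Rightarrow> 'n \<Rightarrow> nat \<Rightarrow> ('n, 't) vertex \<Rightarrow> bool" where
  "is_vertex P S k U \<longleftrightarrow> (case U of ((X, \<alpha>, \<beta>), lam) \<Rightarrow>
       (X, \<alpha> @ \<beta>) \<in> P \<and> follow P S k (X, \<alpha> @ \<beta>) lam)"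

definition start_vertex :: "('n, 't) prod set \<Rightarrow> 'n \<Rightarrow> nat \<Rightarrow> ('n, 't) vertex" where
  "start_vertex P S k = ((S, [], THE \<eta>. (S, \<eta>) \<in> P), replicate k EndM)"

text \<open>Edge labels: None = \<epsilon>, Some \<tau> with \<tau> \<in> \<Lambda> \<union> \<Sigma>.\<close>
definition nfa_edge :: "('n, 't) prod set \<Rightarrow> 'n \<Rightarrow> nat \<Rightarrow> ('n, 't) vertex \<Rightarrow>
    ('n, 't) sym option \<Rightarrow> ('n, 't) vertex \<Rightarrow> bool" where
  "nfa_edge P S k U l V \<longleftrightarrow> is_vertex P S k U \<and> is_vertex P S k V \<and>
     ((l = None \<and> (\<exists>X \<alpha> Y \<beta> lam \<gamma> \<mu>. U = ((X, \<alpha>, NT Y # \<beta>), lam) \<and> V = ((Y, [], \<gamma>), \<mu>) \<and>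
          \<mu> \<in> First k (Gen P {\<beta> @ lam}))) \<or>
      (\<exists>\<tau> X \<alpha> \<beta> lam. l = Some \<tau> \<and> \<tau> \<noteq> EndM \<and> U = ((X, \<alpha>, \<tau> # \<beta>), lam) \<and>
          V = ((X, \<alpha> @ [\<tau>], \<beta>), lam)))"

definition has_action :: "('n, 't) prod set \<Rightarrow> nat \<Rightarrow> ('n, 't) vertex \<Rightarrow> ('n, 't) sym list \<Rightarrow> bool" where
  "has_action P k U la \<longleftrightarrow>
     (\<exists>X \<alpha> lam. U = ((X, \<alpha>, []), lam) \<and> la = lam) \<or>
     (\<exists>X \<alpha> \<sigma> \<beta> lam. U = ((X, \<alpha>, Tm \<sigma> # \<beta>), lam) \<and> la \<in> First k (Gen P {Tm \<sigma> # \<beta> @ lam}))"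

datatype ('n, 't) ptree = Leaf 't | Node 'n "('n, 't) ptree list"

fun root :: "('n, 't) ptree \<Rightarrow> ('n, 't) sym" where
  "root (Leaf t) = Tm t"
| "root (Node A ts) = NT A"

fun valid_tree :: "('n, 't) prod set \<Rightarrow> ('n, 't) ptree \<Rightarrow> bool" where
  "valid_tree P (Leaf t) = True"
| "valid_tree P (Node A ts) = ((A, map root ts) \<in> P \<and> (\<forall>t \<in> set ts. valid_tree P t))"

fun yield :: "('n, 't) ptree \<Rightarrow> 't list" where
  "yield (Leaf t) = [t]"
| "yield (Node A ts) = concat (map yield ts)"

datatype ('n, 't) lr_op = Shift 't | Reduce "('n, 't) prod"

fun lr_parse :: "('n, 't) ptree \<Rightarrow> ('n, 't) lr_op list" where
  "lr_parse (Leaf t) = [Shift t]"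
| "lr_parse (Node A ts) = concat (map lr_parse ts) @ [Reduce (A, map root ts)]"

end

theory Submission
  imports Defs
begin

text \<open>
  Walk along the path, keeping as invariant that the forest of trees consumed so far is viable
  at the current vertex \<open>(X \<rightarrow> \<alpha>\<cdot>\<beta>, \<lambda>)\<close>: every parse forest for \<open>\<beta>\<close> appended to it extends
  to a parse tree of \<open>S\<close> whose remaining sentence has lookahead \<open>\<lambda>\<close>.  At the start vertex the
  tree \<open>S \<rightarrow> \<eta>\<close> witnesses this.  A labelled edge moves the next tree across the dot.  An
  \<open>\<epsilon>\<close>-edge into \<open>(Y \<rightarrow> \<cdot>\<gamma>, \<mu>)\<close> wraps a forest for \<open>\<gamma>\<close> into a \<open>Y\<close>-node and realises
  \<open>\<mu> \<in> First\<^sub>k(Gen(\<beta>\<lambda>))\<close> by a forest for \<open>\<beta>\<close>; since postorder lists the children before the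
  node, the LR parse of the consumed trees stays a prefix.  At the last vertex the action on
  \<open>la\<close> again means \<open>la \<in> First\<^sub>k(Gen(\<beta>\<lambda>))\<close>, which yields the required completion.
\<close>

lemma wf_grammar_start_production:
  "wf_grammar P S \<Longrightarrow> (S, THE \<eta>. (S, \<eta>) \<in> P) \<in> P"
  by (auto simp: wf_grammar_def intro: theI')

lemma wf_grammar_rhs_no_EndM: "wf_grammar P S \<Longrightarrow> \<forall>(A, \<gamma>) \<in> P. EndM \<notin> set \<gamma>"
  by (auto simp: wf_grammar_def)

definition parse_forest ::
    "('n, 't) prod set \<Rightarrow> ('n, 't) sym list \<Rightarrow> ('n, 't) ptree list \<Rightarrow> bool" where
  "parse_forest P \<alpha> R \<longleftrightarrow> (\<forall>t \<in> set R. valid_tree P t) \<and> map root R = \<alpha>"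

lemma parse_forest_append_iff:
  "parse_forest P (\<alpha> @ \<beta>) R \<longleftrightarrow>
     (\<exists>R1 R2. R = R1 @ R2 \<and> parse_forest P \<alpha> R1 \<and> parse_forest P \<beta> R2)"
  by (fastforce simp: parse_forest_def map_eq_append_conv)

lemma terminal_str_map_Tm:
  assumes "is_terminal_str x" "EndM \<notin> set x"
  shows "\<exists>ts. x = map Tm ts"
  using assms
proof (induction x)
  case (Cons a x)
  then obtain ts where "x = map Tm ts" by (auto simp: is_terminal_str_def)
  moreover obtain t where "a = Tm t"
    using Cons.prems by (cases a) (auto simp: is_terminal_str_def)
  ultimately show ?case by (metis list.simps(9))
qed simp

lemma step_append_terminal_str:
  assumes "step P (x @ w) z" "is_terminal_str w"
  shows "\<exists>x'. z = x' @ w \<and> step P x x'"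
proof -
  obtain u v A \<gamma> where prod: "(A, \<gamma>) \<in> P" and x_w: "x @ w = u @ NT A # v" and z: "z = u @ \<gamma> @ v"
    using assms(1) by (auto simp: step_def)
  have "NT A \<notin> set w" using assms(2) by (auto simp: is_terminal_str_def)
  then obtain v' where "x = u @ NT A # v'" "v = v' @ w"
    using x_w by (auto simp: append_eq_append_conv2 append_eq_Cons_conv)
  then show ?thesis using prod z by (auto simp: step_def)
qed

lemma derives_parse_forest:
  assumes "(step P)\<^sup>*\<^sup>* (x @ w) y" "is_terminal_str y" "is_terminal_str w"
    and "EndM \<notin> set x" "\<forall>(A, \<gamma>) \<in> P. EndM \<notin> set \<gamma>"
  shows "\<exists>R. parse_forest P x R \<and> y = map Tm (concat (map yield R)) @ w"
  using assms(1,4)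
proof (induction "x @ w" arbitrary: x rule: converse_rtranclp_induct)
  case base
  then obtain ts where "x = map Tm ts"
    using assms(2) terminal_str_map_Tm by (metis is_terminal_str_def Un_iff set_append)
  then have "parse_forest P x (map Leaf ts) \<and> y = map Tm (concat (map yield (map Leaf ts))) @ w"
    using base by (auto simp: parse_forest_def comp_def map_concat)
  then show ?case by blast
next
  case (step z)
  obtain x' where z: "z = x' @ w" and x_x': "step P x x'"
    using step_append_terminal_str[OF step.hyps(1) assms(3)] by blast
  obtain u v A \<gamma> where prod: "(A, \<gamma>) \<in> P" and x: "x = u @ NT A # v" and x': "x' = u @ \<gamma> @ v"
    using x_x' by (auto simp: step_def)
  have "EndM \<notin> set x'" using step.prems prod assms(5) x x' by auto
  then obtain R' where R': "parse_forest P x' R'" "y = map Tm (concat (map yield R')) @ w"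
    using step.hyps(3) z by blast
  then obtain Ru R\<gamma> Rv where "R' = Ru @ R\<gamma> @ Rv" and
    forests: "parse_forest P u Ru" "parse_forest P \<gamma> R\<gamma>" "parse_forest P v Rv"
    using x' by (auto simp: parse_forest_append_iff)
  then have "parse_forest P x (Ru @ Node A R\<gamma> # Rv)
      \<and> y = map Tm (concat (map yield (Ru @ Node A R\<gamma> # Rv))) @ w"
    using prod x R'(2) by (auto simp: parse_forest_def)
  then show ?case by blast
qed

lemma Gen_parse_forest:
  assumes "y \<in> Gen P {x @ w}" "is_terminal_str w"
    and "EndM \<notin> set x" "\<forall>(A, \<gamma>) \<in> P. EndM \<notin> set \<gamma>"
  shows "\<exists>R. parse_forest P x R \<and> y = map Tm (concat (map yield R)) @ w"
  using assms derives_parse_forest[of P x w y] by (auto simp: Gen_def)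

lemma follow_terminal_str: "follow P S k p lam \<Longrightarrow> is_terminal_str lam"
proof (induction rule: follow.induct)
  case (propagate X \<alpha> Y \<beta> lam \<gamma> \<mu>)
  then obtain y where "y \<in> Gen P {\<beta> @ lam}" "\<mu> = take k y" by (auto simp: First_def)
  then show ?case by (auto simp: Gen_def is_terminal_str_def dest: in_set_takeD)
qed (auto simp: is_terminal_str_def)

lemma is_vertex_start_vertex:
  assumes "wf_grammar P S"
  shows "is_vertex P S k (start_vertex P S k)"
  using wf_grammar_start_production[OF assms]
  by (auto simp: is_vertex_def start_vertex_def intro: follow.start)

lemma is_vertex_terminal_lookahead:
  assumes "wf_grammar P S" "is_vertex P S k ((X, \<alpha>, \<beta>), lam)"
  shows "EndM \<notin> set \<beta>" "is_terminal_str lam"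
  using assms wf_grammar_rhs_no_EndM follow_terminal_str by (fastforce simp: is_vertex_def)+

lemma has_action_lookahead:
  assumes "has_action P k ((X, \<alpha>, \<beta>), lam) la" "length la = k" "is_terminal_str la"
  shows "la \<in> First k (Gen P {\<beta> @ lam})"
proof -
  consider (reduce) "\<beta> = []" "la = lam"
    | (shift) \<sigma> \<beta>' where "\<beta> = Tm \<sigma> # \<beta>'" "la \<in> First k (Gen P {Tm \<sigma> # \<beta>' @ lam})"
    using assms(1) unfolding has_action_def by auto
  then show ?thesis
  proof cases
    case reduce
    then have "la \<in> Gen P {\<beta> @ lam}"
      using assms(3) by (simp add: Gen_def)
    then show ?thesis
      using assms(2) unfolding First_def by force
  qed simp
qed

definition completable ::
    "('n, 't) prod set \<Rightarrow> 'n \<Rightarrow> nat \<Rightarrow> ('n, 't) ptree list \<Rightarrow> ('n, 't) sym list \<Rightarrow> bool" where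
  "completable P S k Q la \<longleftrightarrow> (\<exists>ys tr. valid_tree P tr \<and> root tr = NT S \<and>
     yield tr = concat (map yield Q) @ ys \<and> prefix (concat (map lr_parse Q)) (lr_parse tr) \<and>
     take k (map Tm ys @ replicate k EndM) = la)"

lemma completable_append_forest:
  assumes "completable P S k (Q @ R) la"
  shows "completable P S k Q (take k (map Tm (concat (map yield R)) @ la))"
proof -
  obtain ys tr where tr: "valid_tree P tr" "root tr = NT S"
      "yield tr = concat (map yield (Q @ R)) @ ys"
      "prefix (concat (map lr_parse (Q @ R))) (lr_parse tr)"
    and la: "take k (map Tm ys @ replicate k EndM) = la"
    using assms unfolding completable_def by blast
  have "take k (map Tm (concat (map yield R) @ ys) @ replicate k EndM)
      = take k (map Tm (concat (map yield R)) @ la)"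
    unfolding la[symmetric] by (simp add: take_append)
  moreover have "yield tr = concat (map yield Q) @ concat (map yield R) @ ys"
    using tr(3) by simp
  moreover have "prefix (concat (map lr_parse Q)) (lr_parse tr)"
    using tr(4) by (rule prefix_order.trans[rotated]) simp
  ultimately show ?thesis
    using tr(1,2) unfolding completable_def by blast
qed

lemma completable_Node:
  assumes "completable P S k (Q @ [Node A R]) la"
  shows "completable P S k (Q @ R) la"
proof -
  obtain ys tr where tr: "valid_tree P tr" "root tr = NT S"
      "yield tr = concat (map yield (Q @ [Node A R])) @ ys"
      "prefix (concat (map lr_parse (Q @ [Node A R]))) (lr_parse tr)"
    and la: "take k (map Tm ys @ replicate k EndM) = la"
    using assms unfolding completable_def by blast
  have "yield tr = concat (map yield (Q @ R)) @ ys"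
    using tr(3) by simp
  moreover have "prefix (concat (map lr_parse (Q @ R))) (lr_parse tr)"
    using tr(4) by (rule prefix_order.trans[rotated]) simp
  ultimately show ?thesis
    using tr(1,2) la unfolding completable_def by blast
qed

fun viable ::
    "('n, 't) prod set \<Rightarrow> 'n \<Rightarrow> nat \<Rightarrow> ('n, 't) ptree list \<Rightarrow> ('n, 't) vertex \<Rightarrow> bool" where
  "viable P S k Q ((X, \<alpha>, \<beta>), lam) \<longleftrightarrow>
     (\<forall>R. parse_forest P \<beta> R \<longrightarrow> completable P S k (Q @ R) lam)"

lemma viable_start_vertex:
  assumes "wf_grammar P S"
  shows "viable P S k [] (start_vertex P S k)"
proof -
  have "completable P S k R (replicate k EndM)" if "parse_forest P (THE \<eta>. (S, \<eta>) \<in> P) R" for R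
    using wf_grammar_start_production[OF assms] that unfolding completable_def parse_forest_def
    by (intro exI[of _ "[]"] exI[of _ "Node S R"]) auto
  then show ?thesis
    by (simp add: start_vertex_def)
qed

lemma viable_shift:
  assumes "viable P S k Q ((X, \<alpha>, \<tau> # \<beta>), lam)" "valid_tree P T" "root T = \<tau>"
  shows "viable P S k (Q @ [T]) ((X, \<alpha> @ [\<tau>], \<beta>), lam)"
proof (unfold viable.simps, intro allI impI)
  fix R assume "parse_forest P \<beta> R"
  then have "parse_forest P (\<tau> # \<beta>) (T # R)"
    using assms(2,3) by (simp add: parse_forest_def)
  then have "completable P S k (Q @ T # R) lam"
    using assms(1) by (simp only: viable.simps)
  then show "completable P S k ((Q @ [T]) @ R) lam"
    by simp
qed

lemma viable_lookahead:
  assumes "viable P S k Q ((X, \<alpha>, \<beta>), lam)" "la \<in> First k (Gen P {\<beta> @ lam})"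
    and "is_terminal_str lam" "EndM \<notin> set \<beta>" "\<forall>(A, \<gamma>) \<in> P. EndM \<notin> set \<gamma>"
  shows "completable P S k Q la"
proof -
  obtain y where y: "y \<in> Gen P {\<beta> @ lam}" "la = take k y"
    using assms(2) by (auto simp: First_def)
  then obtain R where "parse_forest P \<beta> R" "y = map Tm (concat (map yield R)) @ lam"
    using Gen_parse_forest assms(3-5) by blast
  then show ?thesis
    using assms(1) y(2) completable_append_forest by fastforce
qed

lemma viable_closure:
  assumes "viable P S k Q ((X, \<alpha>, NT Y # \<beta>), lam)" "(Y, \<gamma>) \<in> P"
    and "\<mu> \<in> First k (Gen P {\<beta> @ lam})"
    and "is_terminal_str lam" "EndM \<notin> set \<beta>" "\<forall>(A, \<gamma>) \<in> P. EndM \<notin> set \<gamma>"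
  shows "viable P S k Q ((Y, [], \<gamma>), \<mu>)"
proof (unfold viable.simps, intro allI impI)
  fix R assume "parse_forest P \<gamma> R"
  then have "valid_tree P (Node Y R)" "root (Node Y R) = NT Y"
    using assms(2) by (auto simp: parse_forest_def)
  then have "viable P S k (Q @ [Node Y R]) ((X, \<alpha> @ [NT Y], \<beta>), lam)"
    by (rule viable_shift[OF assms(1)])
  then have "completable P S k (Q @ [Node Y R]) \<mu>"
    by (rule viable_lookahead[OF _ assms(3-6)])
  then show "completable P S k (Q @ R) \<mu>"
    by (rule completable_Node)
qed

definition start_path :: "('n, 't) prod set \<Rightarrow> 'n \<Rightarrow> nat \<Rightarrow>
    ('n, 't) vertex list \<Rightarrow> ('n, 't) sym option list \<Rightarrow> bool" where
  "start_path P S k us ls \<longleftrightarrow> length us = length ls + 1 \<and> us ! 0 = start_vertex P S k \<and>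
     (\<forall>i < length ls. nfa_edge P S k (us ! i) (ls ! i) (us ! (i + 1)))"

definition edge_word :: "'a option list \<Rightarrow> 'a list" where
  "edge_word ls = map the (filter (\<lambda>l. l \<noteq> None) ls)"

lemma start_path_is_vertex:
  assumes "wf_grammar P S" "start_path P S k us ls" "n \<le> length ls"
  shows "is_vertex P S k (us ! n)"
proof (cases n)
  case 0
  then show ?thesis using assms is_vertex_start_vertex by (simp add: start_path_def)
next
  case (Suc m)
  then show ?thesis using assms by (auto simp: start_path_def nfa_edge_def)
qed

lemma viable_start_path:
  assumes wf: "wf_grammar P S" and path: "start_path P S k us ls" and "n \<le> length ls"
    and "parse_forest P (edge_word (take n ls)) Q"
  shows "viable P S k Q (us ! n)"
  using assms(3,4)
proof (induction n arbitrary: Q)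
  case 0
  then show ?case
    using path viable_start_vertex[OF wf] by (simp add: start_path_def edge_word_def parse_forest_def)
next
  case (Suc n)
  have edge: "nfa_edge P S k (us ! n) (ls ! n) (us ! Suc n)"
    using path Suc.prems(1) by (simp add: start_path_def)
  have word: "edge_word (take (Suc n) ls) = edge_word (take n ls) @ edge_word [ls ! n]"
    using Suc.prems(1) by (simp add: edge_word_def take_Suc_conv_app_nth)
  from edge consider
      (closure) X \<alpha> Y \<beta> lam \<gamma> \<mu> where "ls ! n = None" "us ! n = ((X, \<alpha>, NT Y # \<beta>), lam)"
        "us ! Suc n = ((Y, [], \<gamma>), \<mu>)" "\<mu> \<in> First k (Gen P {\<beta> @ lam})"
        "is_vertex P S k (us ! n)" "is_vertex P S k (us ! Suc n)"
    | (shift) \<tau> X \<alpha> \<beta> lam where "ls ! n = Some \<tau>" "us ! n = ((X, \<alpha>, \<tau> # \<beta>), lam)"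
        "us ! Suc n = ((X, \<alpha> @ [\<tau>], \<beta>), lam)"
    unfolding nfa_edge_def by blast
  then show ?case
  proof cases
    case closure
    have "viable P S k Q ((X, \<alpha>, NT Y # \<beta>), lam)"
      using Suc closure(1,2) word by (simp add: edge_word_def)
    moreover have "(Y, \<gamma>) \<in> P"
      using closure(3,6) by (simp add: is_vertex_def)
    moreover note is_vertex_terminal_lookahead[OF wf closure(5)[unfolded closure(2)]]
    ultimately show ?thesis
      using viable_closure closure(3,4) wf_grammar_rhs_no_EndM[OF wf] by simp
  next
    case shift
    obtain Q' T where "Q = Q' @ [T]" "parse_forest P (edge_word (take n ls)) Q'"
        "valid_tree P T" "root T = \<tau>"
      using Suc.prems(2) word shift(1) by (auto simp: edge_word_def parse_forest_def map_eq_append_conv)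
    then show ?thesis
      using Suc.IH Suc.prems(1) shift(2,3) viable_shift by fastforce
  qed
qed

theorem mainTheorem13:
  fixes P :: "('n, 't) prod set" and S :: 'n and k :: nat
    and us :: "('n, 't) vertex list" and ls :: "('n, 't) sym option list"
    and la :: "('n, 't) sym list" and xs :: "'t list" and Ps :: "('n, 't) ptree list"
  assumes wf: "wf_grammar P S"
    and len: "length us = length ls + 1"
    and start: "us ! 0 = start_vertex P S k"
    and edges: "\<forall>i < length ls. nfa_edge P S k (us ! i) (ls ! i) (us ! (i + 1))"
    and act: "has_action P k (last us) la"
    and la_len: "length la = k" and la_gamma: "\<forall>s \<in> set la. \<forall>A. s \<noteq> NT A"
    and Ps_len: "length Ps = length (map the (filter (\<lambda>l. l \<noteq> None) ls))"
    and Ps_root: "\<forall>j < length Ps. root (Ps ! j) = map the (filter (\<lambda>l. l \<noteq> None) ls) ! j"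
    and Ps_valid: "\<forall>j < length Ps. valid_tree P (Ps ! j)"
    and Ps_yield: "concat (map yield Ps) = xs"
  shows "\<exists>ys tr. First k {map Tm ys @ replicate k EndM} = {la} \<and>
           valid_tree P tr \<and> root tr = NT S \<and> yield tr = xs @ ys \<and>
           prefix (concat (map lr_parse Ps)) (lr_parse tr)"
proof -
  have path: "start_path P S k us ls"
    using len start edges by (simp add: start_path_def)
  have last_us: "last us = us ! length ls"
    using len by (subst last_conv_nth) auto
  obtain X \<alpha> \<beta> lam where last: "last us = ((X, \<alpha>, \<beta>), lam)"
    by (metis prod.exhaust)
  have "parse_forest P (edge_word ls) Ps"
    using Ps_len Ps_root Ps_valid
    by (auto simp: parse_forest_def edge_word_def in_set_conv_nth intro: nth_equalityI)
  then have viable: "viable P S k Ps ((X, \<alpha>, \<beta>), lam)"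
    using viable_start_path[OF wf path order.refl] last_us last by simp
  have "is_vertex P S k ((X, \<alpha>, \<beta>), lam)"
    using start_path_is_vertex[OF wf path order.refl] last_us last by simp
  note vertex = is_vertex_terminal_lookahead[OF wf this]
  have "la \<in> First k (Gen P {\<beta> @ lam})"
    using has_action_lookahead act last la_len la_gamma by (simp add: is_terminal_str_def)
  from viable_lookahead[OF viable this vertex(2,1) wf_grammar_rhs_no_EndM[OF wf]]
  obtain ys tr where "valid_tree P tr" "root tr = NT S" "yield tr = xs @ ys"
      "prefix (concat (map lr_parse Ps)) (lr_parse tr)" "take k (map Tm ys @ replicate k EndM) = la"
    using Ps_yield unfolding completable_def by blast
  then show ?thesis
    by (intro exI[of _ ys] exI[of _ tr]) (simp add: First_def)
qed

end
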